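(* Let $d \ge 1$, $m \ge 1$, let $\theta^* \in \mathbb{R}^d \setminus \{0\}$ and $\sigma > 0$, and let $(x_1, y_1), \dots, (x_m, y_m)$ be i.i.d. samples from the $(\theta^*, \sigma)$-Gaussian model. Let $h : \mathbb{R}^d \to \{-1, +1\}$ be any classifier, let $\hat{y}_i = h(x_i)$, and let $\bar{z} = \frac{1}{m} \sum_{i=1}^m \hat{y}_i x_i$. Then $$ \mathbb{P}\left( \|\bar{z}\|_2 \ge (1 + c)\|\theta^*\|_2 + 2\sigma \sqrt{\frac{d}{m}} \right) \le e^{-6\sqrt{d}/5}, $$ where $c = \frac{\sqrt{20}\,\sigma}{\|\theta^*\|_2} \sqrt{\frac{\sqrt{d}}{m} + \log 2}$.
   Context: The $(\theta^*, \sigma)$-Gaussian model is the distribution over $(x, y) \in \mathbb{R}^d \times \{\pm 1\}$ obtained by drawing $y \in \{\pm 1\}$ uniformly at random and then drawing $x \sim \mathcal{N}(y \cdot \theta^*, \sigma^2 I_d)$. *)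

theory Defs
  imports "HOL-Probability.Probability"
begin

definition gauss_vec_density :: "real^'d \<Rightarrow> real \<Rightarrow> real^'d \<Rightarrow> real" where
  "gauss_vec_density mu sg x = (\<Prod>i\<in>UNIV. normal_density (mu $ i) sg (x $ i))"

text \<open>The (theta, sg)-Gaussian model: y uniform on {-1,+1}, x ~ N(y theta, sg^2 I).
  Realised as a density w.r.t. Lebesgue measure times counting measure on {-1,1}.\<close>
definition gauss_model :: "real^'d \<Rightarrow> real \<Rightarrow> ((real^'d) \<times> real) measure" where
  "gauss_model theta sg =
     density (lborel \<Otimes>\<^sub>M count_space {-1, 1})
       (\<lambda>(x, y). ennreal (1/2 * gauss_vec_density (y *\<^sub>R theta) sg x))"

definition gauss_samples :: "nat \<Rightarrow> real^'d \<Rightarrow> real \<Rightarrow> (nat \<Rightarrow> (real^'d) \<times> real) measure" where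
  "gauss_samples m theta sg = PiM {..<m} (\<lambda>_. gauss_model theta sg)"

end

theory Submission
  imports Defs
begin

text \<open>Write a sample as x = y theta + g with g ~ N(0, sg^2 I).  The predictions of h on the
  m samples form one of 2^m sign patterns s, and then
  sum_i h(x_i) x_i = sum_i s_i g_i + (sum_i s_i y_i) theta,
  where sum_i s_i g_i ~ N(0, m sg^2 I) and the second term has norm at most m |theta|.  So the
  event forces |sum_i s_i g_i| >= r = m (c |theta| + 2 sg sqrt(d/m)) for some pattern s.
  Completing the square coordinatewise and integrating out one sample at a time gives
  E exp(|sum_i s_i g_i|^2 / (4 m sg^2)) = 2^(d/2); Chernoff's bound and a union bound over the
  patterns then bound the probability by 2^m 2^(d/2) exp(-r^2 / (4 m sg^2)), and the choice of c
  makes this at most exp(-6 sqrt d / 5).\<close>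

lemma borel_measurable_vec_nth[measurable (raw)]:
  "f \<in> borel_measurable M \<Longrightarrow> (\<lambda>x. (f x :: real^'n::finite) $ i) \<in> borel_measurable M"
  by (rule measurable_compose[OF _ borel_measurable_nth])

lemma measurable_snd_count_space[measurable]:
  "(\<lambda>p. snd p :: real) \<in> borel_measurable (M \<Otimes>\<^sub>M count_space A)"
  by (rule measurable_compose[OF measurable_snd]) simp

lemma nn_integral_lborel_vec_prod:
  fixes F :: "'d::finite \<Rightarrow> real \<Rightarrow> ennreal"
  assumes [measurable]: "\<And>i. F i \<in> borel_measurable borel"
  shows "(\<integral>\<^sup>+x. (\<Prod>i\<in>UNIV. F i (x $ i)) \<partial>(lborel :: (real^'d) measure))
       = (\<Prod>i\<in>UNIV. \<integral>\<^sup>+t. F i t \<partial>lborel)"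
proof -
  have Basis: "(Basis :: (real^'d) set) = (\<lambda>i. axis i 1) ` UNIV"
    by (auto simp: Basis_vec_def)
  have inj: "inj (\<lambda>i::'d. axis i (1::real))"
    by (auto simp: inj_on_def axis_eq_axis)
  have "(\<Prod>i\<in>UNIV. F i (x $ i)) = (\<Prod>b\<in>Basis. F (axis_index b) (x \<bullet> b))" for x :: "real^'d"
    unfolding Basis by (subst prod.reindex[OF inj]) (simp add: inner_axis)
  moreover have "(\<Prod>i\<in>UNIV. \<integral>\<^sup>+t. F i t \<partial>lborel)
      = (\<Prod>b\<in>(Basis :: (real^'d) set). \<integral>\<^sup>+t. F (axis_index b) t \<partial>lborel)"
    unfolding Basis by (subst prod.reindex[OF inj]) simp
  ultimately show ?thesis
    by (simp only:) (rule nn_integral_lborel_prod, auto)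
qed

lemma nn_integral_lborel_translate:
  fixes c :: "'a::euclidean_space"
  assumes [measurable]: "F \<in> borel_measurable borel"
  shows "(\<integral>\<^sup>+x. F x \<partial>lborel) = (\<integral>\<^sup>+z. F (c + z) \<partial>lborel)"
  by (subst lborel_distr_plus[of c, symmetric]) (simp add: nn_integral_distr)

lemma normal_density_mult_exp_square:
  fixes sg l v s t :: real
  assumes sg: "sg > 0" and s: "s * s = 1" and l: "2 * l * sg\<^sup>2 < 1"
  defines "a \<equiv> 1 - 2 * l * sg\<^sup>2"
  shows "normal_density 0 sg t * exp (l * (v + s * t)\<^sup>2)
     = 1 / sqrt a * exp (l * v\<^sup>2 / a) * normal_density (2 * l * s * v * sg\<^sup>2 / a) (sg / sqrt a) t"
proof -
  define mu where "mu = 2 * l * s * v * sg\<^sup>2 / a"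
  have a: "a > 0" using l by (simp add: a_def)
  have var: "(sg / sqrt a)\<^sup>2 = sg\<^sup>2 / a" using a by (simp add: power_divide)
  have "2 * sg\<^sup>2 * a * (- (t - 0)\<^sup>2 / (2 * sg\<^sup>2) + l * (v + s * t)\<^sup>2) = - a * t\<^sup>2 + 2 * sg\<^sup>2 * a * l * (v + s * t)\<^sup>2"
    using sg by (simp add: algebra_simps)
  also have "\<dots> = 2 * sg\<^sup>2 * l * v\<^sup>2 - (a * t - 2 * l * s * v * sg\<^sup>2)\<^sup>2"
    using s unfolding a_def by algebra
  also have "a * t - 2 * l * s * v * sg\<^sup>2 = a * (t - mu)"
    using a by (simp add: mu_def right_diff_distrib)
  also have "2 * sg\<^sup>2 * l * v\<^sup>2 - (a * (t - mu))\<^sup>2 = 2 * sg\<^sup>2 * a * (l * v\<^sup>2 / a + - (t - mu)\<^sup>2 / (2 * (sg / sqrt a)\<^sup>2))"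
    using sg a unfolding var by (simp add: field_simps power2_eq_square)
  finally have exponent: "- (t - 0)\<^sup>2 / (2 * sg\<^sup>2) + l * (v + s * t)\<^sup>2 = l * v\<^sup>2 / a + - (t - mu)\<^sup>2 / (2 * (sg / sqrt a)\<^sup>2)"
    using sg a by simp
  have const: "1 / sqrt (2 * pi * sg\<^sup>2) = 1 / sqrt a * (1 / sqrt (2 * pi * (sg / sqrt a)\<^sup>2))"
    using a sg unfolding var by (simp add: real_sqrt_divide real_sqrt_mult)
  have "normal_density 0 sg t * exp (l * (v + s * t)\<^sup>2)
      = 1 / sqrt a * (1 / sqrt (2 * pi * (sg / sqrt a)\<^sup>2))
          * exp (- (t - 0)\<^sup>2 / (2 * sg\<^sup>2) + l * (v + s * t)\<^sup>2)"
    unfolding normal_density_def const exp_add by (simp only: mult_ac)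
  also have "\<dots> = 1 / sqrt a * exp (l * v\<^sup>2 / a) * normal_density mu (sg / sqrt a) t"
    unfolding exponent exp_add normal_density_def by (simp only: mult_ac)
  finally show ?thesis unfolding mu_def .
qed

lemma nn_integral_normal_density_exp_square:
  fixes sg l v s :: real
  assumes sg: "sg > 0" and s: "s * s = 1" and l: "2 * l * sg\<^sup>2 < 1"
  shows "(\<integral>\<^sup>+t. ennreal (normal_density 0 sg t * exp (l * (v + s * t)\<^sup>2)) \<partial>lborel)
     = ennreal (1 / sqrt (1 - 2 * l * sg\<^sup>2) * exp (l * v\<^sup>2 / (1 - 2 * l * sg\<^sup>2)))"
proof -
  have a: "1 - 2 * l * sg\<^sup>2 > 0" using l by simp
  define K where "K = 1 / sqrt (1 - 2 * l * sg\<^sup>2) * exp (l * v\<^sup>2 / (1 - 2 * l * sg\<^sup>2))"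
  define mu' where "mu' = 2 * l * s * v * sg\<^sup>2 / (1 - 2 * l * sg\<^sup>2)"
  define sg' where "sg' = sg / sqrt (1 - 2 * l * sg\<^sup>2)"
  have "K \<ge> 0" and "sg' > 0" using a sg by (simp_all add: K_def sg'_def)
  have "(\<integral>\<^sup>+t. ennreal (normal_density 0 sg t * exp (l * (v + s * t)\<^sup>2)) \<partial>lborel)
      = (\<integral>\<^sup>+t. ennreal K * ennreal (normal_density mu' sg' t) \<partial>lborel)"
    unfolding normal_density_mult_exp_square[OF sg s l] K_def[symmetric] mu'_def[symmetric] sg'_def[symmetric]
    using \<open>K \<ge> 0\<close> by (simp add: ennreal_mult)
  also have "\<dots> = ennreal K * (\<integral>\<^sup>+t. ennreal (normal_density mu' sg' t) \<partial>lborel)"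
    by (simp add: nn_integral_cmult)
  also have "(\<integral>\<^sup>+t. ennreal (normal_density mu' sg' t) \<partial>lborel) = 1"
    using \<open>sg' > 0\<close> by (subst nn_integral_eq_integral) auto
  finally show ?thesis by (simp add: K_def)
qed

lemma gauss_vec_density_nonneg: "gauss_vec_density mu sg x \<ge> 0"
  unfolding gauss_vec_density_def by (simp add: prod_nonneg)

lemma gauss_vec_density_translate: "gauss_vec_density mu sg (mu + z) = gauss_vec_density 0 sg z"
  unfolding gauss_vec_density_def normal_density_def by simp

lemma borel_measurable_gauss_vec_density[measurable]:
  "f \<in> borel_measurable M \<Longrightarrow> g \<in> borel_measurable M
    \<Longrightarrow> (\<lambda>x. gauss_vec_density (g x) sg (f x :: real^'d::finite)) \<in> borel_measurable M"
  unfolding gauss_vec_density_def normal_density_def by measurable simp_all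

lemma nn_integral_gauss_vec_density_exp_norm_square:
  fixes w :: "real^'d" and sg l s :: real
  assumes sg: "sg > 0" and s: "s * s = 1" and l: "2 * l * sg\<^sup>2 < 1"
  shows "(\<integral>\<^sup>+z. ennreal (gauss_vec_density 0 sg z * exp (l * (norm (w + s *\<^sub>R z))\<^sup>2)) \<partial>lborel)
     = ennreal ((1 / sqrt (1 - 2 * l * sg\<^sup>2)) ^ CARD('d) * exp (l * (norm w)\<^sup>2 / (1 - 2 * l * sg\<^sup>2)))"
proof -
  have a: "1 - 2 * l * sg\<^sup>2 > 0" using l by simp
  have norm2: "(norm x)\<^sup>2 = (\<Sum>i\<in>UNIV. (x $ i)\<^sup>2)" for x :: "real^'d"
    by (simp add: norm_vec_def L2_set_def sum_nonneg)
  have "ennreal (gauss_vec_density 0 sg z * exp (l * (norm (w + s *\<^sub>R z))\<^sup>2))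
     = (\<Prod>i\<in>UNIV. ennreal (normal_density 0 sg (z $ i) * exp (l * (w $ i + s * z $ i)\<^sup>2)))" for z :: "real^'d"
    unfolding gauss_vec_density_def norm2 sum_distrib_left exp_sum[OF finite]
    by (simp add: prod_ennreal prod.distrib)
  then have "(\<integral>\<^sup>+z. ennreal (gauss_vec_density 0 sg z * exp (l * (norm (w + s *\<^sub>R z))\<^sup>2)) \<partial>lborel)
      = (\<Prod>i\<in>UNIV. ennreal (1 / sqrt (1 - 2 * l * sg\<^sup>2) * exp (l * (w $ i)\<^sup>2 / (1 - 2 * l * sg\<^sup>2))))"
    by (simp only:) (subst nn_integral_lborel_vec_prod,
        measurable, simp add: nn_integral_normal_density_exp_square[OF sg s l])
  also have "\<dots> = ennreal ((1 / sqrt (1 - 2 * l * sg\<^sup>2)) ^ CARD('d) * exp (l * (norm w)\<^sup>2 / (1 - 2 * l * sg\<^sup>2)))"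
    using a by (simp add: prod_ennreal prod.distrib norm2 sum_divide_distrib sum_distrib_left exp_sum prod_dividef power_one_over)
  finally show ?thesis .
qed

lemma sets_gauss_model[measurable_cong]:
  "sets (gauss_model theta sg) = sets (lborel \<Otimes>\<^sub>M count_space {-1, 1::real})"
  by (simp add: gauss_model_def)

lemma space_gauss_model: "space (gauss_model theta sg) = UNIV \<times> {-1, 1::real}"
  by (simp add: gauss_model_def space_pair_measure)

lemma nn_integral_gauss_model_exp_norm_square:
  fixes theta w :: "real^'d" and sg l s :: real
  assumes sg: "sg > 0" and s: "s * s = 1" and l: "2 * l * sg\<^sup>2 < 1"
  shows "(\<integral>\<^sup>+p. ennreal (exp (l * (norm (w + s *\<^sub>R (fst p - snd p *\<^sub>R theta)))\<^sup>2)) \<partial>gauss_model theta sg)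
     = ennreal ((1 / sqrt (1 - 2 * l * sg\<^sup>2)) ^ CARD('d) * exp (l * (norm w)\<^sup>2 / (1 - 2 * l * sg\<^sup>2)))"
    (is "_ = ennreal ?K")
proof -
  interpret labels: sigma_finite_measure "count_space {-1, 1::real}"
    by (rule sigma_finite_measure_count_space_finite) simp
  define f where "f = (\<lambda>x y. ennreal (1/2 * gauss_vec_density (y *\<^sub>R theta) sg x)
      * ennreal (exp (l * (norm (w + s *\<^sub>R (x - y *\<^sub>R theta)))\<^sup>2)))"
  have f_measurable[measurable]: "(\<lambda>x. f x y) \<in> borel_measurable borel" for y
    unfolding f_def by measurable
  have label_term: "(\<integral>\<^sup>+x. f x y \<partial>lborel) = ennreal (1/2) * ennreal ?K" for y
  proof -
    have "(\<integral>\<^sup>+x. f x y \<partial>lborel) = (\<integral>\<^sup>+z. f (y *\<^sub>R theta + z) y \<partial>lborel)"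
      by (rule nn_integral_lborel_translate) measurable
    also have "\<dots> = (\<integral>\<^sup>+z. ennreal (1/2)
        * ennreal (gauss_vec_density 0 sg z * exp (l * (norm (w + s *\<^sub>R z))\<^sup>2)) \<partial>lborel)"
    proof (rule nn_integral_cong)
      fix z :: "real^'d"
      show "f (y *\<^sub>R theta + z) y = ennreal (1/2)
          * ennreal (gauss_vec_density 0 sg z * exp (l * (norm (w + s *\<^sub>R z))\<^sup>2))"
        unfolding f_def gauss_vec_density_translate add_diff_cancel_left'
        by (metis gauss_vec_density_nonneg ennreal_mult' ennreal_mult'' mult.assoc)
    qed
    also have "\<dots> = ennreal (1/2) * ennreal ?K"
      by (subst nn_integral_cmult) (measurable, simp add: nn_integral_gauss_vec_density_exp_norm_square[OF sg s l])
    finally show ?thesis .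
  qed
  have "(\<integral>\<^sup>+p. ennreal (exp (l * (norm (w + s *\<^sub>R (fst p - snd p *\<^sub>R theta)))\<^sup>2)) \<partial>gauss_model theta sg)
      = (\<integral>\<^sup>+x. \<integral>\<^sup>+y. f x y \<partial>count_space {-1, 1} \<partial>lborel)"
    unfolding gauss_model_def
    by (subst nn_integral_density) (auto simp: labels.nn_integral_fst[symmetric] case_prod_beta f_def)
  also have "\<dots> = (\<Sum>y\<in>{-1, 1::real}. \<integral>\<^sup>+x. f x y \<partial>lborel)"
    by (simp add: nn_integral_count_space_finite nn_integral_add f_measurable)
  also have "\<dots> = ennreal ?K"
    unfolding label_term by (simp add: mult.assoc[symmetric] ennreal_divide_times divide_ennreal_def[symmetric])
  finally show ?thesis .
qed

lemma prob_space_gauss_model: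
  fixes theta :: "real^'d"
  assumes "sg > 0"
  shows "prob_space (gauss_model theta sg)"
proof
  show "emeasure (gauss_model theta sg) (space (gauss_model theta sg)) = 1"
    using nn_integral_gauss_model_exp_norm_square[OF assms, where l=0 and s=1 and w=0 and theta=theta]
    by (simp add: nn_integral_const)
qed

lemma nn_integral_PiM_insert_gauss_model_exp_norm_square:
  fixes theta w :: "real^'d" and sg l :: real and s :: "nat \<Rightarrow> real" and I :: "nat set"
  assumes sg: "sg > 0" and I: "finite I" "i \<notin> I" and s: "s i * s i = 1" and l: "2 * l * sg\<^sup>2 < 1"
  shows "(\<integral>\<^sup>+S. ennreal (exp (l * (norm (w + (\<Sum>j\<in>insert i I. s j *\<^sub>R (fst (S j) - snd (S j) *\<^sub>R theta))))\<^sup>2))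
      \<partial>PiM (insert i I) (\<lambda>_. gauss_model theta sg))
    = ennreal ((1 / sqrt (1 - 2 * l * sg\<^sup>2)) ^ CARD('d))
      * (\<integral>\<^sup>+S. ennreal (exp (l / (1 - 2 * l * sg\<^sup>2)
          * (norm (w + (\<Sum>j\<in>I. s j *\<^sub>R (fst (S j) - snd (S j) *\<^sub>R theta))))\<^sup>2))
        \<partial>PiM I (\<lambda>_. gauss_model theta sg))"
proof -
  interpret G: prob_space "gauss_model theta sg"
    by (rule prob_space_gauss_model[OF sg])
  interpret P: product_sigma_finite "\<lambda>_::nat. gauss_model theta sg"
    by (simp add: product_sigma_finite_def G.sigma_finite_measure_axioms)
  define a where "a = 1 - 2 * l * sg\<^sup>2"
  define V where "V S = (\<Sum>j\<in>I. s j *\<^sub>R (fst (S j) - snd (S j) *\<^sub>R theta))"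
    for S :: "nat \<Rightarrow> (real^'d) \<times> real"
  have a: "a > 0"
    using l by (simp add: a_def)
  have "(\<integral>\<^sup>+S. ennreal (exp (l * (norm (w + (\<Sum>j\<in>insert i I. s j *\<^sub>R (fst (S j) - snd (S j) *\<^sub>R theta))))\<^sup>2))
      \<partial>PiM (insert i I) (\<lambda>_. gauss_model theta sg))
    = (\<integral>\<^sup>+S. \<integral>\<^sup>+p. ennreal (exp (l * (norm ((w + V S) + s i *\<^sub>R (fst p - snd p *\<^sub>R theta)))\<^sup>2))
         \<partial>gauss_model theta sg \<partial>PiM I (\<lambda>_. gauss_model theta sg))"
  proof (subst P.product_nn_integral_insert[OF I], measurable, intro nn_integral_cong)
    fix S p
    have "(\<Sum>j\<in>insert i I. s j *\<^sub>R (fst ((S(i := p)) j) - snd ((S(i := p)) j) *\<^sub>R theta))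
        = V S + s i *\<^sub>R (fst p - snd p *\<^sub>R theta)"
      unfolding V_def using I by (subst sum.insert) (auto intro!: sum.cong)
    then show "ennreal (exp (l * (norm (w + (\<Sum>j\<in>insert i I.
          s j *\<^sub>R (fst ((S(i := p)) j) - snd ((S(i := p)) j) *\<^sub>R theta))))\<^sup>2))
      = ennreal (exp (l * (norm ((w + V S) + s i *\<^sub>R (fst p - snd p *\<^sub>R theta)))\<^sup>2))"
      by (simp add: add.assoc)
  qed
  also have "\<dots> = (\<integral>\<^sup>+S. ennreal ((1 / sqrt a) ^ CARD('d)) * ennreal (exp (l / a * (norm (w + V S))\<^sup>2))
      \<partial>PiM I (\<lambda>_. gauss_model theta sg))"
    using a by (simp add: nn_integral_gauss_model_exp_norm_square[OF sg s l] a_def[symmetric] flip: ennreal_mult)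
  also have "\<dots> = ennreal ((1 / sqrt a) ^ CARD('d))
      * (\<integral>\<^sup>+S. ennreal (exp (l / a * (norm (w + V S))\<^sup>2)) \<partial>PiM I (\<lambda>_. gauss_model theta sg))"
  proof (rule nn_integral_cmult)
    show "(\<lambda>S. ennreal (exp (l / a * (norm (w + V S))\<^sup>2))) \<in> borel_measurable (PiM I (\<lambda>_. gauss_model theta sg))"
      unfolding V_def by measurable
  qed
  finally show ?thesis
    unfolding a_def V_def .
qed

lemma nn_integral_PiM_gauss_model_exp_norm_square:
  fixes theta w :: "real^'d" and sg l :: real and s :: "nat \<Rightarrow> real" and I :: "nat set"
  assumes sg: "sg > 0" and "finite I" and "\<And>i. i \<in> I \<Longrightarrow> s i * s i = 1"
    and "2 * l * sg\<^sup>2 * card I < 1"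
  shows "(\<integral>\<^sup>+S. ennreal (exp (l * (norm (w + (\<Sum>i\<in>I. s i *\<^sub>R (fst (S i) - snd (S i) *\<^sub>R theta))))\<^sup>2))
      \<partial>PiM I (\<lambda>_. gauss_model theta sg))
    = ennreal ((1 / sqrt (1 - 2 * l * sg\<^sup>2 * card I)) ^ CARD('d)
        * exp (l * (norm w)\<^sup>2 / (1 - 2 * l * sg\<^sup>2 * card I)))"
  using assms(2-)
proof (induction I arbitrary: l w rule: finite_induct)
  case empty
  show ?case by (simp add: PiM_empty)
next
  case (insert i I)
  define n where "n = real (card I)"
  define a where "a = 1 - 2 * l * sg\<^sup>2"
  define l' where "l' = l / a"
  define b where "b = 1 - 2 * l' * sg\<^sup>2 * n"
  have card: "real (card (insert i I)) = n + 1"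
    using insert by (simp add: n_def)
  have l: "2 * l * sg\<^sup>2 < 1"
  proof (cases "l \<ge> 0")
    case True
    then have "2 * l * sg\<^sup>2 * 1 \<le> 2 * l * sg\<^sup>2 * (n + 1)"
      by (intro mult_left_mono) (simp_all add: n_def)
    then show ?thesis
      using insert.prems(2) card by simp
  qed (smt (verit) mult_nonpos_nonneg zero_le_power2)
  then have a: "a > 0"
    by (simp add: a_def)
  have ab: "a * b = 1 - 2 * l * sg\<^sup>2 * card (insert i I)"
    using a by (simp add: card a_def b_def l'_def field_simps)
  then have "a * b > 0"
    using insert.prems(2) by simp
  then have b: "b > 0"
    using a by (simp add: zero_less_mult_iff)
  have IH: "(\<integral>\<^sup>+S. ennreal (exp (l' * (norm (w + (\<Sum>j\<in>I. s j *\<^sub>R (fst (S j) - snd (S j) *\<^sub>R theta))))\<^sup>2))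
      \<partial>PiM I (\<lambda>_. gauss_model theta sg))
    = ennreal ((1 / sqrt b) ^ CARD('d) * exp (l' * (norm w)\<^sup>2 / b))"
    using insert.IH[of l' w] insert.prems(1) b unfolding b_def n_def by simp
  have "(\<integral>\<^sup>+S. ennreal (exp (l * (norm (w + (\<Sum>j\<in>insert i I. s j *\<^sub>R (fst (S j) - snd (S j) *\<^sub>R theta))))\<^sup>2))
      \<partial>PiM (insert i I) (\<lambda>_. gauss_model theta sg))
    = ennreal ((1 / sqrt a) ^ CARD('d))
      * (\<integral>\<^sup>+S. ennreal (exp (l' * (norm (w + (\<Sum>j\<in>I. s j *\<^sub>R (fst (S j) - snd (S j) *\<^sub>R theta))))\<^sup>2))
        \<partial>PiM I (\<lambda>_. gauss_model theta sg))"
    unfolding a_def l'_def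
    by (rule nn_integral_PiM_insert_gauss_model_exp_norm_square[where s=s,
        OF sg insert(1,2) insert.prems(1)[OF insertI1] l])
  also have "\<dots> = ennreal ((1 / sqrt a) ^ CARD('d)) * ennreal ((1 / sqrt b) ^ CARD('d) * exp (l' * (norm w)\<^sup>2 / b))"
    unfolding IH ..
  also have "\<dots> = ennreal ((1 / sqrt (a * b)) ^ CARD('d) * exp (l * (norm w)\<^sup>2 / (a * b)))"
    using a b by (simp add: l'_def real_sqrt_mult power_mult_distrib[symmetric] flip: ennreal_mult)
  finally show ?case
    unfolding ab .
qed

lemma gauss_samples_signed_noise_tail:
  fixes theta :: "real^'d" and s :: "nat \<Rightarrow> real" and sg r :: real
  assumes sg: "sg > 0" and "m \<ge> 1" and signs: "\<And>i. i < m \<Longrightarrow> s i \<in> {-1, 1}" and "r \<ge> 0"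
  shows "measure (gauss_samples m theta sg)
      {S \<in> space (gauss_samples m theta sg). r \<le> norm (\<Sum>i<m. s i *\<^sub>R (fst (S i) - snd (S i) *\<^sub>R theta))}
    \<le> exp (- r\<^sup>2 / (4 * real m * sg\<^sup>2)) * sqrt 2 ^ CARD('d)"
proof -
  define M where "M = gauss_samples m theta sg"
  define V where "V S = (\<Sum>i<m. s i *\<^sub>R (fst (S i) - snd (S i) *\<^sub>R theta))"
    for S :: "nat \<Rightarrow> (real^'d) \<times> real"
  define l where "l = 1 / (4 * real m * sg\<^sup>2)"
  have l: "l > 0" and half: "1 - 2 * l * sg\<^sup>2 * card {..<m} = 1 / 2"
    using \<open>m \<ge> 1\<close> sg by (simp_all add: l_def field_simps)
  have unit_signs: "s i * s i = 1" if "i < m" for i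
    using signs[OF that] by auto
  have [measurable]: "(\<lambda>S. (norm (V S))\<^sup>2) \<in> borel_measurable M"
    unfolding M_def gauss_samples_def V_def by measurable
  have "{S \<in> space M. r \<le> norm (V S)} = {S \<in> space M. r\<^sup>2 \<le> (norm (V S))\<^sup>2}"
    using \<open>r \<ge> 0\<close> by (auto simp: abs_le_square_iff[symmetric])
  also have "emeasure M \<dots> \<le> ennreal (exp (- l * r\<^sup>2))
      * (\<integral>\<^sup>+S. ennreal (exp (l * (norm (V S))\<^sup>2)) * indicator (space M) S \<partial>M)"
    using l by (intro Chernoff_ineq_nn_integral_ge) auto
  also have "(\<integral>\<^sup>+S. ennreal (exp (l * (norm (V S))\<^sup>2)) * indicator (space M) S \<partial>M)
      = (\<integral>\<^sup>+S. ennreal (exp (l * (norm (0 + V S))\<^sup>2)) \<partial>M)"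
    by (intro nn_integral_cong) simp
  also have "\<dots> = ennreal ((1 / sqrt (1 - 2 * l * sg\<^sup>2 * card {..<m})) ^ CARD('d)
      * exp (l * (norm (0 :: real^'d))\<^sup>2 / (1 - 2 * l * sg\<^sup>2 * card {..<m})))"
    unfolding M_def gauss_samples_def V_def
    by (rule nn_integral_PiM_gauss_model_exp_norm_square[OF sg])
      (use unit_signs half in auto)
  also have "\<dots> = ennreal (sqrt 2 ^ CARD('d))"
    unfolding half by (simp add: real_sqrt_divide)
  finally have "emeasure M {S \<in> space M. r \<le> norm (V S)} \<le> ennreal (exp (- l * r\<^sup>2) * sqrt 2 ^ CARD('d))"
    by (simp add: ennreal_mult)
  then show ?thesis
    unfolding M_def V_def l_def by (simp add: measure_def enn2real_leI)
qed

lemma sets_gauss_samples_signed_noise_UN: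
  fixes theta :: "real^'d" and S :: "(nat \<Rightarrow> real) set"
  assumes "finite S"
  shows "(\<Union>s\<in>S. {x \<in> space (gauss_samples m theta sg).
      r \<le> norm (\<Sum>i<m. s i *\<^sub>R (fst (x i) - snd (x i) *\<^sub>R theta))}) \<in> sets (gauss_samples m theta sg)"
  using assms unfolding gauss_samples_def by (intro sets.finite_UN) measurable

lemma measure_gauss_samples_signed_noise_UN_le:
  fixes theta :: "real^'d" and sg r :: real
  assumes "sg > 0" and "m \<ge> 1" and "r \<ge> 0"
  shows "measure (gauss_samples m theta sg) (\<Union>s\<in>{..<m} \<rightarrow>\<^sub>E {-1, 1}.
      {S \<in> space (gauss_samples m theta sg). r \<le> norm (\<Sum>i<m. s i *\<^sub>R (fst (S i) - snd (S i) *\<^sub>R theta))})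
    \<le> 2 ^ m * (exp (- r\<^sup>2 / (4 * real m * sg\<^sup>2)) * sqrt 2 ^ CARD('d))"
proof -
  interpret prob_space "gauss_samples m theta sg"
    unfolding gauss_samples_def using assms(1) by (intro prob_space_PiM prob_space_gauss_model)
  have "measure (gauss_samples m theta sg) (\<Union>s\<in>{..<m} \<rightarrow>\<^sub>E {-1, 1}.
      {S \<in> space (gauss_samples m theta sg). r \<le> norm (\<Sum>i<m. s i *\<^sub>R (fst (S i) - snd (S i) *\<^sub>R theta))})
    \<le> (\<Sum>s\<in>{..<m} \<rightarrow>\<^sub>E {-1, 1}. measure (gauss_samples m theta sg)
      {S \<in> space (gauss_samples m theta sg). r \<le> norm (\<Sum>i<m. s i *\<^sub>R (fst (S i) - snd (S i) *\<^sub>R theta))})"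
    by (intro measure_UNION_le finite_PiE) (simp_all add: gauss_samples_def)
  also have "\<dots> \<le> (\<Sum>s\<in>{..<m} \<rightarrow>\<^sub>E {-1, 1::real}. exp (- r\<^sup>2 / (4 * real m * sg\<^sup>2)) * sqrt 2 ^ CARD('d))"
    using assms by (intro sum_mono gauss_samples_signed_noise_tail) (simp_all add: PiE_iff)
  also have "\<dots> = 2 ^ m * (exp (- r\<^sup>2 / (4 * real m * sg\<^sup>2)) * sqrt 2 ^ CARD('d))"
    by (simp add: card_PiE)
  finally show ?thesis .
qed

lemma norm_sum_scaleR_le_shift:
  fixes x :: "nat \<Rightarrow> 'a::real_normed_vector" and a y :: "nat \<Rightarrow> real"
  assumes "\<And>i. i \<in> I \<Longrightarrow> \<bar>a i\<bar> \<le> 1" and "\<And>i. i \<in> I \<Longrightarrow> \<bar>y i\<bar> \<le> 1"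
  shows "norm (\<Sum>i\<in>I. a i *\<^sub>R x i) \<le> norm (\<Sum>i\<in>I. a i *\<^sub>R (x i - y i *\<^sub>R v)) + card I * norm v"
proof -
  have "\<bar>\<Sum>i\<in>I. a i * y i\<bar> \<le> (\<Sum>i\<in>I. \<bar>a i * y i\<bar>)"
    by (rule sum_abs)
  also have "\<dots> \<le> (\<Sum>i\<in>I. 1)"
    using assms by (intro sum_mono) (simp add: abs_mult mult_le_one)
  finally have "\<bar>\<Sum>i\<in>I. a i * y i\<bar> * norm v \<le> card I * norm v"
    by (simp add: mult_right_mono)
  moreover have "(\<Sum>i\<in>I. a i *\<^sub>R x i) = (\<Sum>i\<in>I. a i *\<^sub>R (x i - y i *\<^sub>R v)) + (\<Sum>i\<in>I. a i * y i) *\<^sub>R v"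
    by (simp add: scaleR_diff_right sum_subtractf scaleR_sum_left)
  ultimately show ?thesis
    using norm_triangle_ineq[of "\<Sum>i\<in>I. a i *\<^sub>R (x i - y i *\<^sub>R v)" "(\<Sum>i\<in>I. a i * y i) *\<^sub>R v"]
    by simp
qed

lemma gauss_samples_event_subset_signed_noise:
  fixes theta :: "real^'d" and h :: "real^'d \<Rightarrow> real" and t :: real
  assumes "m \<ge> 1" and h: "\<And>x. h x \<in> {-1, 1}"
  shows "{S \<in> space (gauss_samples m theta sg). t \<le> norm ((1 / real m) *\<^sub>R (\<Sum>i<m. h (fst (S i)) *\<^sub>R fst (S i)))}
    \<subseteq> (\<Union>s\<in>{..<m} \<rightarrow>\<^sub>E {-1, 1}. {S \<in> space (gauss_samples m theta sg).
          real m * (t - norm theta) \<le> norm (\<Sum>i<m. s i *\<^sub>R (fst (S i) - snd (S i) *\<^sub>R theta))})"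
proof safe
  fix S assume S: "S \<in> space (gauss_samples m theta sg)"
    and t: "t \<le> norm ((1 / real m) *\<^sub>R (\<Sum>i<m. h (fst (S i)) *\<^sub>R fst (S i)))"
  have S_space: "S \<in> (\<Pi>\<^sub>E i\<in>{..<m}. UNIV \<times> {-1, 1})"
    using S by (simp add: gauss_samples_def space_PiM space_gauss_model)
  have labels: "\<bar>snd (S i)\<bar> \<le> 1" if "i < m" for i
    using PiE_mem[OF S_space, of i] that by (auto simp: mem_Times_iff)
  have predictions: "\<bar>h x\<bar> \<le> 1" for x
    using h[of x] by auto
  define s where "s = restrict (\<lambda>i. h (fst (S i))) {..<m}"
  have "s \<in> {..<m} \<rightarrow>\<^sub>E {-1, 1}"
    using h by (simp add: s_def)
  have sum_eq: "(\<Sum>i<m. h (fst (S i)) *\<^sub>R (fst (S i) - snd (S i) *\<^sub>R theta))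
      = (\<Sum>i<m. s i *\<^sub>R (fst (S i) - snd (S i) *\<^sub>R theta))"
    by (intro sum.cong) (simp_all add: s_def)
  have "real m * t \<le> norm (\<Sum>i<m. h (fst (S i)) *\<^sub>R fst (S i))"
    using t \<open>m \<ge> 1\<close> by (simp add: pos_le_divide_eq mult.commute)
  also have "\<dots> \<le> norm (\<Sum>i<m. s i *\<^sub>R (fst (S i) - snd (S i) *\<^sub>R theta)) + m * norm theta"
    using norm_sum_scaleR_le_shift[of "{..<m}" "\<lambda>i. h (fst (S i))" "\<lambda>i. snd (S i)" "\<lambda>i. fst (S i)" theta]
      labels predictions
    unfolding sum_eq by simp
  finally have "real m * (t - norm theta) \<le> norm (\<Sum>i<m. s i *\<^sub>R (fst (S i) - snd (S i) *\<^sub>R theta))"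
    by (simp add: algebra_simps)
  with S \<open>s \<in> {..<m} \<rightarrow>\<^sub>E {-1, 1}\<close> show "S \<in> (\<Union>s\<in>{..<m} \<rightarrow>\<^sub>E {-1, 1}. {S \<in> space (gauss_samples m theta sg).
          real m * (t - norm theta) \<le> norm (\<Sum>i<m. s i *\<^sub>R (fst (S i) - snd (S i) *\<^sub>R theta))})"
    by blast
qed

lemma union_bound_exponent_le:
  fixes nt sg :: real and m n :: nat
  assumes nt: "nt > 0" and sg: "sg > 0" and m: "m \<ge> 1"
  defines "c \<equiv> sqrt 20 * sg / nt * sqrt (sqrt n / m + ln 2)"
  defines "r \<equiv> real m * (c * nt + 2 * sg * sqrt (n / m))"
  shows "2 ^ m * (exp (- r\<^sup>2 / (4 * real m * sg\<^sup>2)) * sqrt 2 ^ n) \<le> exp (- 6 * sqrt n / 5)"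
proof -
  define p where "p = c * nt"
  define q where "q = 2 * sg * sqrt (n / m)"
  have "p \<ge> 0" "q \<ge> 0"
    using nt sg by (simp_all add: p_def q_def c_def)
  have p2: "p\<^sup>2 = 20 * sg\<^sup>2 * (sqrt n / m + ln 2)"
    using nt by (simp add: p_def c_def power_mult_distrib power_divide add_nonneg_nonneg)
  have q2: "q\<^sup>2 = 4 * sg\<^sup>2 * (n / m)"
    by (simp add: q_def power_mult_distrib)
  have "r\<^sup>2 = (real m)\<^sup>2 * (p + q)\<^sup>2"
    by (simp add: r_def p_def q_def power_mult_distrib)
  also have "\<dots> \<ge> (real m)\<^sup>2 * (p\<^sup>2 + q\<^sup>2)"
    using \<open>p \<ge> 0\<close> \<open>q \<ge> 0\<close> by (intro mult_left_mono) (simp_all add: power2_sum)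
  finally have "r\<^sup>2 / (4 * real m * sg\<^sup>2) \<ge> (real m)\<^sup>2 * (p\<^sup>2 + q\<^sup>2) / (4 * real m * sg\<^sup>2)"
    using m sg by (intro divide_right_mono) simp_all
  also have "(real m)\<^sup>2 * (p\<^sup>2 + q\<^sup>2) / (4 * real m * sg\<^sup>2) = 5 * sqrt n + 5 * m * ln 2 + n"
    unfolding p2 q2 using m sg by (simp add: field_simps power2_eq_square)
  finally have exponent: "r\<^sup>2 / (4 * real m * sg\<^sup>2) \<ge> 5 * sqrt n + 5 * m * ln 2 + n" .
  have "sqrt 2 ^ n = exp (n * ln (sqrt 2))"
    by (simp add: exp_of_nat_mult)
  moreover have "(2::real) ^ m = exp (m * ln 2)"
    by (simp add: exp_of_nat_mult)
  ultimately have "2 ^ m * (exp (- r\<^sup>2 / (4 * real m * sg\<^sup>2)) * sqrt 2 ^ n)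
      = exp (m * ln 2 - r\<^sup>2 / (4 * real m * sg\<^sup>2) + n * (ln 2 / 2))"
    by (simp only: ln_sqrt mult_exp_exp) (simp add: algebra_simps)
  also have "\<dots> \<le> exp (- 6 * sqrt n / 5)"
  proof -
    have "n * (ln 2 / 2) \<le> n"
      using ln_2_less_1 by (intro mult_left_le) simp_all
    moreover have "m * ln 2 \<ge> 0" and "sqrt n \<ge> 0"
      by simp_all
    ultimately show ?thesis
      using exponent by (subst exp_le_cancel_iff) linarith
  qed
  finally show ?thesis .
qed

theorem lemma3:
  fixes theta :: "real^'d" and sg :: real and m :: nat and h :: "real^'d \<Rightarrow> real"
  assumes "m \<ge> 1" and "theta \<noteq> 0" and "sg > 0"
    and "h \<in> borel_measurable borel" and "\<And>x. h x \<in> {-1, 1}"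
  defines "c \<equiv> sqrt 20 * sg / norm theta * sqrt (sqrt (real CARD('d)) / real m + ln 2)"
  shows "measure (gauss_samples m theta sg)
           {S \<in> space (gauss_samples m theta sg).
              norm ((1 / real m) *\<^sub>R (\<Sum>i<m. h (fst (S i)) *\<^sub>R fst (S i)))
                \<ge> (1 + c) * norm theta + 2 * sg * sqrt (real CARD('d) / real m)}
         \<le> exp (- 6 * sqrt (real CARD('d)) / 5)"
proof -
  let ?M = "gauss_samples m theta sg"
  define t where "t = (1 + c) * norm theta + 2 * sg * sqrt (real CARD('d) / real m)"
  define r where "r = real m * (t - norm theta)"
  interpret prob_space ?M
    unfolding gauss_samples_def using assms(3) by (intro prob_space_PiM prob_space_gauss_model)
  have r: "r = real m * (c * norm theta + 2 * sg * sqrt (CARD('d) / m))"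
    by (simp add: r_def t_def algebra_simps)
  have "r \<ge> 0"
    using assms(3) by (simp add: r c_def)
  \<comment> \<open>The event itself need not be measurable.\<close>
  have "measure ?M {S \<in> space ?M. norm ((1 / real m) *\<^sub>R (\<Sum>i<m. h (fst (S i)) *\<^sub>R fst (S i))) \<ge> t}
      \<le> measure ?M (\<Union>s\<in>{..<m} \<rightarrow>\<^sub>E {-1, 1}.
          {S \<in> space ?M. r \<le> norm (\<Sum>i<m. s i *\<^sub>R (fst (S i) - snd (S i) *\<^sub>R theta))})"
    unfolding r_def
    by (intro finite_measure_mono gauss_samples_event_subset_signed_noise[where h=h]
        sets_gauss_samples_signed_noise_UN finite_PiE assms(1,5)) simp_all
  also have "\<dots> \<le> 2 ^ m * (exp (- r\<^sup>2 / (4 * real m * sg\<^sup>2)) * sqrt 2 ^ CARD('d))"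
    using assms(3,1) \<open>r \<ge> 0\<close> by (rule measure_gauss_samples_signed_noise_UN_le)
  also have "\<dots> \<le> exp (- 6 * sqrt (real CARD('d)) / 5)"
    unfolding r c_def using assms(1-3) by (intro union_bound_exponent_le) simp_all
  finally show ?thesis
    unfolding t_def .
qed

end
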